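(* Let $m\ge 2$, $n\ge1$ be integers, let $\mathcal P=(p_{i_1 i_2\dots i_m})\in\mathbb R^{[m,n]}$ be a transition probability tensor with first-index flattening $R\in\mathbb R^{n\times n^{m-1}}$, let $v\in\mathbb R^n$ be a stochastic vector, and let $\alpha\in[0,1)$ satisfy $\alpha<\frac{1}{m-1}$. Define $f:\mathbb R^n\to\mathbb R^n$ by $f(\mathbf{x})=\alpha R(\mathbf{x}\otimes\cdots\otimes\mathbf{x})+(1-\alpha)v-\mathbf{x}$ (with $m-1$ Kronecker factors $\mathbf{x}$), with Jacobian $$J_f(\mathbf{x})=\alpha R\Big(I\otimes\mathbf{x}\otimes\cdots\otimes\mathbf{x}+\mathbf{x}\otimes I\otimes\mathbf{x}\otimes\cdots\otimes\mathbf{x}+\cdots+\mathbf{x}\otimes\cdots\otimes\mathbf{x}\otimes I\Big)-I.$$ Consider the Newton iteration with initial vector $\mathbf{x}_0=0$: $$\mathbf{x}_{k+1}=\mathbf{x}_k-J_f(\mathbf{x}_k)^{-1}f(\mathbf{x}_k),\quad k=0,1,2,\dots$$ Then this iteration converges to the unique solution $\mathbf{x}$ of the multilinear PageRank equation $\mathbf{x}=\alpha R(\mathbf{x}\otimes\cdots\otimes\mathbf{x})+(1-\alpha)v$ (i.e. $f(\mathbf{x})=0$).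
   Context: A transition probability tensor $\mathcal P\in\mathbb R^{[m,n]}$ (order $m$, each dimension $n$) satisfies $p_{i_1\dots i_m}\ge0$ and $\sum_{i_1=1}^n p_{i_1 i_2\dots i_m}=1$ for all $(i_2,\dots,i_m)$. A vector is stochastic if its entries are non-negative and sum to one. The flattening $R$ along the first index is the $n\times n^{m-1}$ matrix with $\big(R(y^{(2)}\otimes\cdots\otimes y^{(m)})\big)_i=\sum_{i_2,\dots,i_m=1}^n p_{i i_2\dots i_m}y^{(2)}_{i_2}\cdots y^{(m)}_{i_m}$ for all $y^{(j)}\in\mathbb R^n$. $I$ is the $n\times n$ identity, $\otimes$ the Kronecker product; in the Jacobian, each of the $m-1$ summands is a Kronecker product of $m-1$ factors with $I$ in exactly one position and $\mathbf{x}$ (as an $n\times1$ matrix) in the other $m-2$ positions. *)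

theory Defs
  imports "HOL-Analysis.Analysis"
begin

text \<open>An order-m tensor with all dimensions n is a function on index lists
  (i_1,...,i_m), the index set {1..n} being the finite type 'n.
  Only lists of length m are relevant.\<close>

definition transition_probability_tensor :: "nat \<Rightarrow> ('n::finite list \<Rightarrow> real) \<Rightarrow> bool" where
  "transition_probability_tensor m P \<longleftrightarrow>
     (\<forall>is. length is = m \<longrightarrow> P is \<ge> 0) \<and>
     (\<forall>is. length is = m - 1 \<longrightarrow> (\<Sum>i\<in>UNIV. P (i # is)) = 1)"

definition stochastic :: "real ^ 'n::finite \<Rightarrow> bool" where
  "stochastic x \<longleftrightarrow> (\<forall>i. x $ i \<ge> 0) \<and> (\<Sum>i\<in>UNIV. x $ i) = 1"

text \<open>Action of the flattening R along the first index on a Kronecker product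
  y^(2) \<otimes> ... \<otimes> y^(m) of vectors, given as the list ys = [y^(2),...,y^(m)]:
  (R(y^(2) \<otimes> ... \<otimes> y^(m)))_i = sum_{i_2..i_m} p_{i i_2 .. i_m} y^(2)_{i_2} ... y^(m)_{i_m}.\<close>

definition flat_apply :: "('n::finite list \<Rightarrow> real) \<Rightarrow> (real ^ 'n) list \<Rightarrow> real ^ 'n" where
  "flat_apply P ys = (\<chi> i. \<Sum>is\<in>{is. length is = length ys}.
       P (i # is) * (\<Prod>j<length ys. ys ! j $ (is ! j)))"

definition R_pow :: "nat \<Rightarrow> ('n::finite list \<Rightarrow> real) \<Rightarrow> real ^ 'n \<Rightarrow> real ^ 'n" where
  "R_pow m P x = flat_apply P (replicate (m - 1) x)"

definition PR_f :: "nat \<Rightarrow> ('n::finite list \<Rightarrow> real) \<Rightarrow> real \<Rightarrow> real ^ 'n \<Rightarrow> real ^ 'n \<Rightarrow> real ^ 'n" where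
  "PR_f m P \<alpha> v x = \<alpha> *\<^sub>R R_pow m P x + (1 - \<alpha>) *\<^sub>R v - x"

text \<open>The Jacobian
  alpha R (I\<otimes>x\<otimes>..\<otimes>x + x\<otimes>I\<otimes>x\<otimes>..\<otimes>x + ... + x\<otimes>..\<otimes>x\<otimes>I) - I.
  Column c of the summand with I in position j (0-based, j < m-1) is
  R(x\<otimes>..\<otimes>e_c\<otimes>..\<otimes>x) with the unit vector e_c in position j.\<close>
definition PR_jac :: "nat \<Rightarrow> ('n::finite list \<Rightarrow> real) \<Rightarrow> real \<Rightarrow> real ^ 'n \<Rightarrow> real ^ 'n ^ 'n" where
  "PR_jac m P \<alpha> x = (\<chi> i c. \<alpha> * (\<Sum>j<m - 1.
        flat_apply P ((replicate (m - 1) x)[j := axis c 1]) $ i)) - mat 1"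

primrec newton_seq :: "nat \<Rightarrow> ('n::finite list \<Rightarrow> real) \<Rightarrow> real \<Rightarrow> real ^ 'n \<Rightarrow> nat \<Rightarrow> real ^ 'n" where
  "newton_seq m P \<alpha> v 0 = 0"
| "newton_seq m P \<alpha> v (Suc k) =
     newton_seq m P \<alpha> v k -
       matrix_inv (PR_jac m P \<alpha> (newton_seq m P \<alpha> v k)) *v PR_f m P \<alpha> v (newton_seq m P \<alpha> v k)"

end

theory Submission
  imports Defs
begin

text \<open>Write \<open>g x = \<alpha> R(x \<otimes> \<dots> \<otimes> x) + (1 - \<alpha>) v\<close>, so that \<open>f x = g x - x\<close> and
  \<open>J\<^sub>f x = \<alpha> J x - I\<close>, where \<open>J x\<close> is the entrywise nonnegative derivative of
  \<open>R(x \<otimes> \<dots> \<otimes> x)\<close>, with column sums \<open>(m - 1) s\<^sup>m\<^sup>-\<^sup>2\<close> for \<open>s = \<Sum>x\<close>.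
  For \<open>x \<ge> 0\<close> with \<open>s \<le> 1\<close> and \<open>\<alpha> (m - 1) < 1\<close>, summing the negative part of a
  solution of \<open>z = \<alpha> J x z + b\<close> with \<open>b \<ge> 0\<close> shows \<open>z \<ge> 0\<close>: the matrix \<open>I - \<alpha> J x\<close>
  has a nonnegative inverse. Since \<open>g\<close> is convex on the nonnegative orthant, the
  Newton iterates therefore increase, remain subsolutions \<open>x \<le> g x\<close> with \<open>\<Sum>x \<le> 1\<close>,
  and stay below every nonnegative solution. Their limit \<open>L\<close> solves \<open>L = g L\<close>,
  so \<open>s = \<Sum>L\<close> satisfies \<open>s = \<alpha> s\<^sup>m\<^sup>-\<^sup>1 + 1 - \<alpha>\<close>, which by Bernoulli's inequality
  forces \<open>s = 1\<close>. A stochastic solution lies above \<open>L\<close> and has the same mass, hence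
  equals \<open>L\<close>.\<close>

lemma sum_lists_length_prod:
  fixes h :: "nat \<Rightarrow> 'n::finite \<Rightarrow> real"
  shows "(\<Sum>is\<in>{is. length is = n}. \<Prod>l<n. h l (is ! l)) = (\<Prod>l<n. \<Sum>k\<in>UNIV. h l k)"
proof (induction n arbitrary: h)
  case 0
  then show ?case by simp
next
  case (Suc n)
  have lists_Suc: "{is::'n list. length is = Suc n} = (\<lambda>(k, is). k # is) ` (UNIV \<times> {is. length is = n})"
    by (auto simp: image_iff length_Suc_conv)
  have inj: "inj_on (\<lambda>(k, is). k # is) (UNIV \<times> {is::'n list. length is = n})"
    by (auto simp: inj_on_def)
  have "(\<Sum>is\<in>{is. length is = Suc n}. \<Prod>l<Suc n. h l (is ! l))
      = (\<Sum>(k, is)\<in>UNIV \<times> {is::'n list. length is = n}. \<Prod>l<Suc n. h l ((k # is) ! l))"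
    unfolding lists_Suc by (subst sum.reindex[OF inj]) (simp add: case_prod_unfold)
  also have "\<dots> = (\<Sum>k\<in>UNIV. \<Sum>is\<in>{is::'n list. length is = n}. h 0 k * (\<Prod>l<n. h (Suc l) (is ! l)))"
    by (subst sum.cartesian_product[symmetric]) (simp del: prod.lessThan_Suc add: prod.lessThan_Suc_shift)
  also have "\<dots> = (\<Sum>k\<in>UNIV. h 0 k) * (\<Prod>l<n. \<Sum>k\<in>UNIV. h (Suc l) k)"
    using Suc[of "\<lambda>l. h (Suc l)"] by (simp add: sum_distrib_left[symmetric] sum_distrib_right)
  also have "\<dots> = (\<Prod>l<Suc n. \<Sum>k\<in>UNIV. h l k)"
    by (simp del: prod.lessThan_Suc add: prod.lessThan_Suc_shift)
  finally show ?case .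
qed

text \<open>\<^const>\<open>flat_apply\<close> with the factors indexed by slot instead of listed, so that a
  single factor can be replaced by function update.\<close>

definition tensor_apply :: "('n::finite list \<Rightarrow> real) \<Rightarrow> nat \<Rightarrow> (nat \<Rightarrow> real ^ 'n) \<Rightarrow> 'n \<Rightarrow> real"
  where "tensor_apply P n ys i = (\<Sum>is\<in>{is. length is = n}. P (i # is) * (\<Prod>l<n. ys l $ (is ! l)))"

lemma tensor_apply_cong:
  "(\<And>l. l < n \<Longrightarrow> ys l = zs l) \<Longrightarrow> tensor_apply P n ys i = tensor_apply P n zs i"
  unfolding tensor_apply_def by (intro sum.cong refl arg_cong2[where f="(*)"] prod.cong) auto

lemma tensor_apply_fun_upd:
  assumes "j < n"
  shows "tensor_apply P n (ys(j := w)) i =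
    (\<Sum>is\<in>{is. length is = n}. P (i # is) * w $ (is ! j) * (\<Prod>l\<in>{..<n}-{j}. ys l $ (is ! l)))"
proof -
  have "(\<Prod>l<n. (ys(j := w)) l $ (is ! l)) = w $ (is ! j) * (\<Prod>l\<in>{..<n}-{j}. ys l $ (is ! l))" for "is"
    using assms by (subst prod.remove[of "{..<n}" j]) (auto intro!: prod.cong)
  then show ?thesis
    unfolding tensor_apply_def by (simp add: mult.assoc)
qed

lemma tensor_apply_upd_diff:
  "j < n \<Longrightarrow> tensor_apply P n (ys(j := u - w)) i = tensor_apply P n (ys(j := u)) i - tensor_apply P n (ys(j := w)) i"
  by (simp add: tensor_apply_fun_upd sum_subtractf[symmetric] algebra_simps)

lemma tensor_apply_upd_uminus:
  "j < n \<Longrightarrow> tensor_apply P n (ys(j := - w)) i = - tensor_apply P n (ys(j := w)) i"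
  by (simp add: tensor_apply_fun_upd sum_negf[symmetric])

lemma tensor_apply_upd_lincomb:
  "j < n \<Longrightarrow> (\<Sum>c\<in>UNIV. tensor_apply P n (ys(j := u c)) i * d $ c) =
    tensor_apply P n (ys(j := \<chi> k. \<Sum>c\<in>UNIV. u c $ k * d $ c)) i"
  by (simp add: tensor_apply_fun_upd sum_distrib_left sum_distrib_right sum.swap[of _ UNIV] algebra_simps)

lemma sum_tensor_apply:
  assumes "\<And>is. length is = n \<Longrightarrow> (\<Sum>i\<in>UNIV. P (i # is)) = 1"
  shows "(\<Sum>i\<in>UNIV. tensor_apply P n ys i) = (\<Prod>l<n. \<Sum>k\<in>UNIV. ys l $ k)"
proof -
  have "(\<Sum>i\<in>UNIV. tensor_apply P n ys i) =
      (\<Sum>is\<in>{is. length is = n}. (\<Sum>i\<in>UNIV. P (i # is)) * (\<Prod>l<n. ys l $ (is ! l)))"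
    unfolding tensor_apply_def by (simp add: sum.swap[of _ UNIV] sum_distrib_right)
  also have "\<dots> = (\<Sum>is\<in>{is. length is = n}. \<Prod>l<n. ys l $ (is ! l))"
    using assms by simp
  also have "\<dots> = (\<Prod>l<n. \<Sum>k\<in>UNIV. ys l $ k)"
    by (rule sum_lists_length_prod)
  finally show ?thesis .
qed

lemma tensor_apply_nonneg:
  "(\<And>is. length is = Suc n \<Longrightarrow> 0 \<le> P is) \<Longrightarrow> (\<And>l k. l < n \<Longrightarrow> 0 \<le> ys l $ k) \<Longrightarrow>
    0 \<le> tensor_apply P n ys i"
  unfolding tensor_apply_def by (intro sum_nonneg mult_nonneg_nonneg prod_nonneg) auto

lemma tensor_apply_mono:
  "(\<And>is. length is = Suc n \<Longrightarrow> 0 \<le> P is) \<Longrightarrow> (\<And>l k. l < n \<Longrightarrow> 0 \<le> ys l $ k \<and> ys l $ k \<le> zs l $ k) \<Longrightarrow>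
    tensor_apply P n ys i \<le> tensor_apply P n zs i"
  unfolding tensor_apply_def by (intro sum_mono mult_left_mono prod_mono) auto

lemma tendsto_tensor_apply:
  "(\<And>l. l < n \<Longrightarrow> (\<lambda>k. Y k l) \<longlonglongrightarrow> Z l) \<Longrightarrow> (\<lambda>k. tensor_apply P n (Y k) i) \<longlonglongrightarrow> tensor_apply P n Z i"
  unfolding tensor_apply_def by (intro tendsto_sum tendsto_mult tendsto_const tendsto_prod tendsto_vec_nth) auto

text \<open>\<open>R(I \<otimes> x \<otimes> \<dots> \<otimes> x + \<dots> + x \<otimes> \<dots> \<otimes> x \<otimes> I) d\<close>, i.e. the derivative of
  \<open>x \<mapsto> R(x \<otimes> \<dots> \<otimes> x)\<close> applied to \<open>d\<close>.\<close>

definition tensor_deriv :: "('n::finite list \<Rightarrow> real) \<Rightarrow> nat \<Rightarrow> real ^ 'n \<Rightarrow> real ^ 'n \<Rightarrow> 'n \<Rightarrow> real"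
  where "tensor_deriv P n x d i = (\<Sum>j<n. tensor_apply P n ((\<lambda>_. x)(j := d)) i)"

lemma tensor_deriv_diff: "tensor_deriv P n x (u - w) i = tensor_deriv P n x u i - tensor_deriv P n x w i"
  unfolding tensor_deriv_def by (simp add: tensor_apply_upd_diff sum_subtractf[symmetric])

lemma tensor_deriv_uminus: "tensor_deriv P n x (- w) i = - tensor_deriv P n x w i"
  unfolding tensor_deriv_def by (simp add: tensor_apply_upd_uminus sum_negf[symmetric])

lemma tensor_deriv_zero: "tensor_deriv P n x 0 i = 0"
  using tensor_deriv_diff[of P n x 0 0 i] by simp

lemma sum_tensor_deriv:
  assumes "\<And>is. length is = n \<Longrightarrow> (\<Sum>i\<in>UNIV. P (i # is)) = 1"
  shows "(\<Sum>i\<in>UNIV. tensor_deriv P n x d i) = real n * (\<Sum>k\<in>UNIV. x $ k) ^ (n - 1) * (\<Sum>k\<in>UNIV. d $ k)"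
proof -
  have "(\<Sum>i\<in>UNIV. tensor_apply P n ((\<lambda>_. x)(j := d)) i) = (\<Sum>k\<in>UNIV. x $ k) ^ (n - 1) * (\<Sum>k\<in>UNIV. d $ k)"
    if "j < n" for j
  proof -
    have "(\<Sum>i\<in>UNIV. tensor_apply P n ((\<lambda>_. x)(j := d)) i) = (\<Prod>l<n. \<Sum>k\<in>UNIV. ((\<lambda>_. x)(j := d)) l $ k)"
      by (rule sum_tensor_apply[OF assms])
    also have "\<dots> = (\<Sum>k\<in>UNIV. d $ k) * (\<Prod>l\<in>{..<n}-{j}. \<Sum>k\<in>UNIV. x $ k)"
      using that by (subst prod.remove[of "{..<n}" j]) (auto intro!: prod.cong)
    finally show ?thesis
      using that by (simp add: mult.commute)
  qed
  then show ?thesis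
    unfolding tensor_deriv_def by (subst sum.swap) simp
qed

lemma tensor_deriv_nonneg:
  "(\<And>is. length is = Suc n \<Longrightarrow> 0 \<le> P is) \<Longrightarrow> (\<And>k. 0 \<le> x $ k) \<Longrightarrow> (\<And>k. 0 \<le> d $ k) \<Longrightarrow>
    0 \<le> tensor_deriv P n x d i"
  unfolding tensor_deriv_def by (intro sum_nonneg tensor_apply_nonneg) auto

lemma tendsto_tensor_deriv:
  "X \<longlonglongrightarrow> x \<Longrightarrow> D \<longlonglongrightarrow> d \<Longrightarrow> (\<lambda>k. tensor_deriv P n (X k) (D k) i) \<longlonglongrightarrow> tensor_deriv P n x d i"
  unfolding tensor_deriv_def
  by (intro tendsto_sum tendsto_tensor_apply) (simp_all split: if_split)

text \<open>Convexity of \<open>x \<mapsto> R(x \<otimes> \<dots> \<otimes> x)\<close> on the nonnegative orthant: telescope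
  from \<open>x \<otimes> \<dots> \<otimes> x\<close> to \<open>y \<otimes> \<dots> \<otimes> y\<close> one factor at a time; in the \<open>j\<close>-th difference
  the factors other than \<open>y - x\<close> are \<open>y\<close> or \<open>x\<close>, and \<open>x \<le> y\<close>.\<close>

lemma tensor_deriv_le_diff:
  assumes P: "transition_probability_tensor (Suc n) P"
    and x: "\<And>k. 0 \<le> x $ k" and xy: "\<And>k. x $ k \<le> y $ k"
  shows "tensor_deriv P n x (y - x) i \<le> tensor_apply P n (\<lambda>_. y) i - tensor_apply P n (\<lambda>_. x) i"
proof -
  define T where "T j = (\<lambda>l::nat. if l < j then y else x)" for j
  have "tensor_apply P n (\<lambda>_. y) i - tensor_apply P n (\<lambda>_. x) i = tensor_apply P n (T n) i - tensor_apply P n (T 0) i"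
    by (intro arg_cong2[where f="(-)"] tensor_apply_cong) (auto simp: T_def)
  also have "\<dots> = (\<Sum>j<n. tensor_apply P n (T (Suc j)) i - tensor_apply P n (T j) i)"
    by (rule sum_lessThan_telescope[symmetric])
  also have "\<dots> = (\<Sum>j<n. tensor_apply P n ((T j)(j := y - x)) i)"
  proof (rule sum.cong[OF refl])
    fix j assume "j \<in> {..<n}"
    moreover have "T (Suc j) = (T j)(j := y)" "T j = (T j)(j := x)"
      by (auto simp: T_def fun_eq_iff)
    ultimately show "tensor_apply P n (T (Suc j)) i - tensor_apply P n (T j) i = tensor_apply P n ((T j)(j := y - x)) i"
      using tensor_apply_upd_diff[of j n P "T j" y x i] by simp
  qed
  finally have telescope: "tensor_apply P n (\<lambda>_. y) i - tensor_apply P n (\<lambda>_. x) i =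
      (\<Sum>j<n. tensor_apply P n ((T j)(j := y - x)) i)" .
  have "tensor_apply P n ((\<lambda>_. x)(j := y - x)) i \<le> tensor_apply P n ((T j)(j := y - x)) i" for j
    using P x xy order_trans[OF x xy] unfolding transition_probability_tensor_def
    by (intro tensor_apply_mono) (auto simp: T_def)
  then show ?thesis
    unfolding telescope tensor_deriv_def by (rule sum_mono)
qed

lemma tensor_deriv_subsolution_eq_0:
  assumes P: "transition_probability_tensor (Suc n) P"
    and x: "\<And>k. 0 \<le> x $ k" "(\<Sum>k\<in>UNIV. x $ k) \<le> 1"
    and a: "0 \<le> a" "a * real n < 1"
    and w: "\<And>k. 0 \<le> w $ k" "\<And>k. w $ k \<le> a * tensor_deriv P n x w k"
  shows "w = 0"
proof -
  have col_sum: "\<And>is. length is = n \<Longrightarrow> (\<Sum>i\<in>UNIV. P (i # is)) = 1"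
    using P by (simp add: transition_probability_tensor_def)
  define s where "s = (\<Sum>k\<in>UNIV. x $ k)"
  have "0 \<le> s" "s \<le> 1"
    using x unfolding s_def by (auto intro: sum_nonneg)
  then have "a * real n * s ^ (n - 1) \<le> a * real n"
    using a by (intro mult_left_le power_le_one) auto
  with a have less_1: "a * real n * s ^ (n - 1) < 1"
    by linarith
  have "(\<Sum>k\<in>UNIV. w $ k) \<le> (\<Sum>k\<in>UNIV. a * tensor_deriv P n x w k)"
    by (rule sum_mono) (rule w(2))
  also have "\<dots> = a * real n * s ^ (n - 1) * (\<Sum>k\<in>UNIV. w $ k)"
    by (simp add: sum_distrib_left[symmetric] sum_tensor_deriv[OF col_sum] s_def mult.assoc)
  finally have "(1 - a * real n * s ^ (n - 1)) * (\<Sum>k\<in>UNIV. w $ k) \<le> 0"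
    by (simp add: algebra_simps)
  with less_1 have "(\<Sum>k\<in>UNIV. w $ k) \<le> 0"
    by (simp add: mult_le_0_iff)
  then have "(\<Sum>k\<in>UNIV. w $ k) = 0"
    using w(1) by (intro order_antisym sum_nonneg) auto
  then show ?thesis
    using w(1) by (simp add: vec_eq_iff sum_nonneg_eq_0_iff)
qed

text \<open>Nonnegativity of \<open>(I - a J x)\<^sup>-\<^sup>1\<close>: the negative part of \<open>z\<close> is a nonnegative
  subsolution of \<open>w = a J x w\<close>, hence zero.\<close>

lemma tensor_deriv_resolvent_nonneg:
  assumes P: "transition_probability_tensor (Suc n) P"
    and x: "\<And>k. 0 \<le> x $ k" "(\<Sum>k\<in>UNIV. x $ k) \<le> 1"
    and a: "0 \<le> a" "a * real n < 1"
    and z: "\<And>i. z $ i = a * tensor_deriv P n x z i + b $ i" and b: "\<And>i. 0 \<le> b $ i"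
  shows "0 \<le> z $ i"
proof -
  define w where "w = (\<chi> i. max (- z $ i) 0)"
  define z_pos where "z_pos = (\<chi> i. max (z $ i) 0)"
  have w_nonneg: "0 \<le> w $ k" for k
    unfolding w_def by simp
  have "w $ k \<le> a * tensor_deriv P n x w k" for k
  proof (cases "z $ k < 0")
    case True
    have "z = z_pos - w"
      unfolding w_def z_pos_def by (auto simp: vec_eq_iff)
    then have J: "tensor_deriv P n x z k = tensor_deriv P n x z_pos k - tensor_deriv P n x w k"
      by (simp add: tensor_deriv_diff)
    have "w $ k = - (a * tensor_deriv P n x z k + b $ k)"
      using True z[of k] unfolding w_def by simp
    also have "\<dots> = a * tensor_deriv P n x w k - a * tensor_deriv P n x z_pos k - b $ k"
      unfolding J by (simp add: algebra_simps)
    finally have "w $ k = a * tensor_deriv P n x w k - a * tensor_deriv P n x z_pos k - b $ k" .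
    moreover have "0 \<le> a * tensor_deriv P n x z_pos k"
      using P a x unfolding transition_probability_tensor_def
      by (intro mult_nonneg_nonneg tensor_deriv_nonneg) (auto simp: z_pos_def)
    ultimately show ?thesis
      using b[of k] by linarith
  next
    case False
    then show ?thesis
      using P a x w_nonneg unfolding transition_probability_tensor_def
      by (simp add: w_def tensor_deriv_nonneg)
  qed
  then have "w = 0"
    using tensor_deriv_subsolution_eq_0[OF P x a w_nonneg] by blast
  then have "w $ i = 0"
    by simp
  then show ?thesis
    by (simp add: w_def max_def split: if_splits)
qed

text \<open>For the equation \<open>s = a s\<^sup>n + 1 - a\<close>: a Newton step from \<open>s \<in> [0, 1]\<close> does not
  overshoot the root \<open>1\<close>, since \<open>n s\<^sup>n\<^sup>-\<^sup>1 (1 - s) \<le> (1 + s + \<dots> + s\<^sup>n\<^sup>-\<^sup>1) (1 - s) = 1 - s\<^sup>n\<close>.\<close>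

lemma scalar_newton_step_le_one:
  fixes s s' a :: real
  assumes s: "0 \<le> s" "s \<le> 1" and a: "0 \<le> a" "a * n < 1"
    and step: "s' = a * s ^ n + (1 - a) + a * n * s ^ (n - 1) * (s' - s)"
  shows "s' \<le> 1"
proof -
  have "real n * s ^ (n - 1) = (\<Sum>i<n. s ^ (n - 1))"
    by simp
  also have "\<dots> \<le> (\<Sum>i<n. s ^ i)"
    using s by (intro sum_mono power_decreasing) auto
  finally have "real n * s ^ (n - 1) * (1 - s) \<le> (\<Sum>i<n. s ^ i) * (1 - s)"
    using s by (intro mult_right_mono) auto
  also have "\<dots> = 1 - s ^ n"
    by (simp add: one_diff_power_eq)
  finally have tangent: "real n * s ^ (n - 1) * (1 - s) \<le> 1 - s ^ n" .
  have "a * n * s ^ (n - 1) \<le> a * n"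
    using s a by (intro mult_left_le power_le_one) auto
  with a have less_1: "a * n * s ^ (n - 1) < 1"
    by linarith
  have "(1 - a * n * s ^ (n - 1)) * (s' - 1) = a * (s ^ n - 1 + real n * s ^ (n - 1) * (1 - s))"
    using step by (simp add: algebra_simps)
  also have "\<dots> \<le> 0"
    using tangent a by (simp add: mult_nonneg_nonpos)
  finally show ?thesis
    using less_1 by (simp add: mult_le_0_iff)
qed

lemma scalar_fixpoint_eq_one:
  fixes s a :: real
  assumes s: "0 \<le> s" "s \<le> 1" and a: "0 \<le> a" "a * n < 1"
    and eq: "s = a * s ^ n + (1 - a)"
  shows "s = 1"
proof (rule ccontr)
  assume "s \<noteq> 1"
  with s have "0 < 1 - s"
    by simp
  have "1 + real n * (s - 1) \<le> (1 + (s - 1)) ^ n"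
    using s by (intro Bernoulli_inequality) simp
  then have "1 - s ^ n \<le> real n * (1 - s)"
    by (simp add: algebra_simps)
  have "1 - s = a * (1 - s ^ n)"
    using eq by (simp add: algebra_simps)
  also have "\<dots> \<le> a * (real n * (1 - s))"
    using \<open>1 - s ^ n \<le> real n * (1 - s)\<close> a(1) by (rule mult_left_mono)
  finally have "(1 - a * n) * (1 - s) \<le> 0"
    by (simp add: algebra_simps)
  moreover have "0 < (1 - a * n) * (1 - s)"
    using a(2) \<open>0 < 1 - s\<close> by simp
  ultimately show False
    by simp
qed

lemma stochastic_eq_if_le:
  assumes "stochastic x" "stochastic y" "\<And>i. x $ i \<le> y $ i"
  shows "x = y"
proof -
  have "(\<Sum>i\<in>UNIV. y $ i - x $ i) = 0"
    using assms(1,2) by (simp add: stochastic_def sum_subtractf)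
  then show ?thesis
    using assms(3) by (simp add: sum_nonneg_eq_0_iff vec_eq_iff)
qed

lemma matrix_inv_right: "invertible A \<Longrightarrow> A ** matrix_inv A = mat 1"
  unfolding invertible_def matrix_inv_def by (rule someI2_ex) auto

lemma R_pow_nth: "R_pow m P x $ i = tensor_apply P (m - 1) (\<lambda>_. x) i"
  unfolding R_pow_def flat_apply_def tensor_apply_def
  by (auto intro!: sum.cong prod.cong arg_cong2[where f="(*)"])

lemma flat_apply_update_nth:
  "j < n \<Longrightarrow> flat_apply P ((replicate n x)[j := y]) $ i = tensor_apply P n ((\<lambda>_. x)(j := y)) i"
  unfolding flat_apply_def tensor_apply_def
  by (auto intro!: sum.cong prod.cong arg_cong2[where f="(*)"] simp: nth_list_update)

lemma PR_jac_mult_nth: "(PR_jac m P \<alpha> x *v d) $ i = \<alpha> * tensor_deriv P (m - 1) x d i - d $ i"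
proof -
  have "axis c 1 $ k * d $ c = (if c = k then d $ c else 0)" for c k
    by (simp add: axis_def)
  then have d: "(\<chi> k. \<Sum>c\<in>UNIV. axis c 1 $ k * d $ c) = d"
    by (simp add: vec_eq_iff)
  have "((\<chi> i c. \<alpha> * (\<Sum>j<m - 1. flat_apply P ((replicate (m - 1) x)[j := axis c 1]) $ i)) *v d) $ i
      = (\<Sum>c\<in>UNIV. \<alpha> * (\<Sum>j<m - 1. tensor_apply P (m - 1) ((\<lambda>_. x)(j := axis c 1)) i) * d $ c)"
    by (simp add: matrix_vector_mult_def flat_apply_update_nth)
  also have "\<dots> = \<alpha> * (\<Sum>j<m - 1. \<Sum>c\<in>UNIV. tensor_apply P (m - 1) ((\<lambda>_. x)(j := axis c 1)) i * d $ c)"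
    by (simp add: sum_distrib_left sum_distrib_right sum.swap[of _ UNIV] mult.assoc)
  also have "\<dots> = \<alpha> * tensor_deriv P (m - 1) x d i"
    unfolding tensor_deriv_def by (simp add: tensor_apply_upd_lincomb d)
  finally show ?thesis
    unfolding PR_jac_def by (simp add: matrix_vector_mult_diff_rdistrib)
qed

locale multilinear_pagerank =
  fixes m :: nat and P :: "'n::finite list \<Rightarrow> real" and v :: "real ^ 'n" and \<alpha> :: real
  assumes m: "m \<ge> 2" and P: "transition_probability_tensor m P" and v: "stochastic v"
    and \<alpha>: "0 \<le> \<alpha>" "\<alpha> < 1" "\<alpha> < 1 / (real m - 1)"
begin

lemma P_nonneg: "length is = Suc (m - 1) \<Longrightarrow> 0 \<le> P is"
  using P m unfolding transition_probability_tensor_def by auto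

lemma P_col_sum: "length is = m - 1 \<Longrightarrow> (\<Sum>i\<in>UNIV. P (i # is)) = 1"
  using P unfolding transition_probability_tensor_def by auto

lemma P_transition_Suc: "transition_probability_tensor (Suc (m - 1)) P"
  using P m by (simp add: Suc_diff_le)

lemma alpha_mult_less_1: "\<alpha> * real (m - 1) < 1"
proof -
  have "real (m - 1) = real m - 1" "0 < real m - 1"
    using m by auto
  then show ?thesis
    using \<alpha>(3) by (simp add: pos_less_divide_eq)
qed

definition pr_map :: "real ^ 'n \<Rightarrow> real ^ 'n"
  where "pr_map x = \<alpha> *\<^sub>R R_pow m P x + (1 - \<alpha>) *\<^sub>R v"

lemma pr_map_nth: "pr_map x $ i = \<alpha> * tensor_apply P (m - 1) (\<lambda>_. x) i + (1 - \<alpha>) * v $ i"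
  by (simp add: pr_map_def R_pow_nth)

lemma sum_pr_map: "(\<Sum>i\<in>UNIV. pr_map x $ i) = \<alpha> * (\<Sum>k\<in>UNIV. x $ k) ^ (m - 1) + (1 - \<alpha>)"
  using v by (simp add: pr_map_nth sum.distrib sum_distrib_left[symmetric] sum_tensor_apply[OF P_col_sum]
      stochastic_def)

lemma PR_jac_invertible:
  assumes x: "\<And>i. 0 \<le> x $ i" "(\<Sum>k\<in>UNIV. x $ k) \<le> 1"
  shows "invertible (PR_jac m P \<alpha> x)"
proof -
  have "z = 0" if "PR_jac m P \<alpha> x *v z = 0" for z
  proof -
    have z: "z $ i = \<alpha> * tensor_deriv P (m - 1) x z i + 0 $ i" for i
      using arg_cong[OF that, of "\<lambda>u. u $ i"] by (simp add: PR_jac_mult_nth)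
    then have minus_z: "(- z) $ i = \<alpha> * tensor_deriv P (m - 1) x (- z) i + 0 $ i" for i
      by (simp add: tensor_deriv_uminus)
    have zero: "0 \<le> (0::real ^ 'n) $ i" for i
      by simp
    have "0 \<le> z $ i" "0 \<le> (- z) $ i" for i
      using tensor_deriv_resolvent_nonneg[OF P_transition_Suc x \<alpha>(1) alpha_mult_less_1 z zero]
        tensor_deriv_resolvent_nonneg[OF P_transition_Suc x \<alpha>(1) alpha_mult_less_1 minus_z zero] by auto
    then show ?thesis
      by (simp add: vec_eq_iff order_antisym)
  qed
  then show ?thesis
    by (simp add: invertible_left_inverse matrix_left_invertible_ker)
qed

definition newton_step :: "real ^ 'n \<Rightarrow> real ^ 'n"
  where "newton_step x = x - matrix_inv (PR_jac m P \<alpha> x) *v PR_f m P \<alpha> v x"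

lemma newton_step_nth:
  assumes "invertible (PR_jac m P \<alpha> x)"
  shows "newton_step x $ i = pr_map x $ i + \<alpha> * tensor_deriv P (m - 1) x (newton_step x - x) i"
proof -
  let ?A = "PR_jac m P \<alpha> x"
  have "?A *v (- u) = - (?A *v u)" for u
    by (simp add: vec_eq_iff matrix_vector_mult_def sum_negf[symmetric])
  then have "?A *v (newton_step x - x) = - (?A *v (matrix_inv ?A *v PR_f m P \<alpha> v x))"
    unfolding newton_step_def by simp
  also have "\<dots> = x - pr_map x"
    by (simp add: matrix_vector_mul_assoc matrix_inv_right[OF assms] PR_f_def pr_map_def)
  finally have "(?A *v (newton_step x - x)) $ i = (x - pr_map x) $ i"
    by simp
  then show ?thesis
    by (simp add: PR_jac_mult_nth)
qed

definition subsolution :: "real ^ 'n \<Rightarrow> bool"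
  where "subsolution x \<longleftrightarrow> (\<forall>i. 0 \<le> x $ i) \<and> (\<Sum>k\<in>UNIV. x $ k) \<le> 1 \<and> (\<forall>i. x $ i \<le> pr_map x $ i)"

lemma subsolution_0: "subsolution 0"
proof -
  have "0 \<le> tensor_apply P (m - 1) (\<lambda>_. 0) i" for i
    by (rule tensor_apply_nonneg) (simp_all add: P_nonneg)
  then show ?thesis
    using \<alpha> v unfolding subsolution_def stochastic_def
    by (auto simp: pr_map_nth intro!: add_nonneg_nonneg mult_nonneg_nonneg)
qed

lemma subsolution_le_newton_step:
  assumes x: "subsolution x"
  shows "x $ i \<le> newton_step x $ i"
proof -
  have x_substochastic: "\<And>k. 0 \<le> x $ k" "(\<Sum>k\<in>UNIV. x $ k) \<le> 1"
    using x by (auto simp: subsolution_def)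
  have e: "(newton_step x - x) $ k = \<alpha> * tensor_deriv P (m - 1) x (newton_step x - x) k + (pr_map x - x) $ k" for k
    using newton_step_nth[OF PR_jac_invertible[OF x_substochastic], of k] by simp
  have b: "0 \<le> (pr_map x - x) $ k" for k
    using x by (simp add: subsolution_def)
  show ?thesis
    using tensor_deriv_resolvent_nonneg[OF P_transition_Suc x_substochastic \<alpha>(1) alpha_mult_less_1 e b, of i] by simp
qed

lemma newton_step_le_solution:
  assumes x: "subsolution x" and xy: "\<And>i. x $ i \<le> y $ i" and y: "y = pr_map y"
  shows "newton_step x $ i \<le> y $ i"
proof -
  have x_substochastic: "\<And>k. 0 \<le> x $ k" "(\<Sum>k\<in>UNIV. x $ k) \<le> 1"
    using x by (auto simp: subsolution_def)
  define x' where "x' = newton_step x"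
  define b where "b = (\<chi> i. \<alpha> * (tensor_apply P (m - 1) (\<lambda>_. y) i - tensor_apply P (m - 1) (\<lambda>_. x) i
      - tensor_deriv P (m - 1) x (y - x) i))"
  have b: "0 \<le> b $ k" for k
    unfolding b_def using tensor_deriv_le_diff[OF P_transition_Suc x_substochastic(1) xy] \<alpha>(1) by simp
  have "y - x' = (y - x) - (x' - x)"
    by simp
  then have e: "(y - x') $ k = \<alpha> * tensor_deriv P (m - 1) x (y - x') k + b $ k" for k
    using newton_step_nth[OF PR_jac_invertible[OF x_substochastic], of k] arg_cong[OF y, of "\<lambda>u. u $ k"]
    by (simp add: x'_def b_def pr_map_nth tensor_deriv_diff algebra_simps)
  show ?thesis
    using tensor_deriv_resolvent_nonneg[OF P_transition_Suc x_substochastic \<alpha>(1) alpha_mult_less_1 e b, of i]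
    by (simp add: x'_def)
qed

lemma subsolution_newton_step:
  assumes x: "subsolution x"
  shows "subsolution (newton_step x)"
proof -
  have x_nonneg: "\<And>k. 0 \<le> x $ k" and x_sum: "(\<Sum>k\<in>UNIV. x $ k) \<le> 1"
    using x by (auto simp: subsolution_def)
  define x' where "x' = newton_step x"
  note x' = newton_step_nth[OF PR_jac_invertible[OF x_nonneg x_sum], folded x'_def]
  have le: "x $ k \<le> x' $ k" for k
    unfolding x'_def by (rule subsolution_le_newton_step[OF x])
  have "\<alpha> * tensor_deriv P (m - 1) x (x' - x) k \<le>
      \<alpha> * (tensor_apply P (m - 1) (\<lambda>_. x') k - tensor_apply P (m - 1) (\<lambda>_. x) k)" for k
    using tensor_deriv_le_diff[OF P_transition_Suc x_nonneg le] \<alpha>(1) by (rule mult_left_mono)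
  then have sub: "x' $ k \<le> pr_map x' $ k" for k
    using x'[of k] by (simp add: pr_map_nth algebra_simps)
  define s where "s = (\<Sum>k\<in>UNIV. x $ k)"
  define s' where "s' = (\<Sum>k\<in>UNIV. x' $ k)"
  have s: "0 \<le> s" "s \<le> 1"
    using x_nonneg x_sum unfolding s_def by (auto intro: sum_nonneg)
  have "s' = (\<Sum>k\<in>UNIV. pr_map x $ k) + \<alpha> * (\<Sum>k\<in>UNIV. tensor_deriv P (m - 1) x (x' - x) k)"
    unfolding s'_def using x' by (simp add: sum.distrib sum_distrib_left)
  also have "\<dots> = \<alpha> * s ^ (m - 1) + (1 - \<alpha>) + \<alpha> * real (m - 1) * s ^ (m - 1 - 1) * (s' - s)"
    by (simp add: sum_pr_map sum_tensor_deriv[OF P_col_sum] sum_subtractf s_def s'_def mult.assoc)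
  finally have "s' \<le> 1"
    by (rule scalar_newton_step_le_one[OF s \<alpha>(1) alpha_mult_less_1])
  moreover have "0 \<le> x' $ k" for k
    using x_nonneg[of k] le[of k] by linarith
  ultimately show ?thesis
    using sub unfolding subsolution_def x'_def[symmetric] s'_def by blast
qed

abbreviation newton :: "nat \<Rightarrow> real ^ 'n"
  where "newton \<equiv> newton_seq m P \<alpha> v"

lemma newton_Suc: "newton (Suc k) = newton_step (newton k)"
  by (simp add: newton_step_def)

declare newton_seq.simps(2) [simp del]

lemma subsolution_newton: "subsolution (newton k)"
  by (induction k) (simp_all add: subsolution_0 newton_Suc subsolution_newton_step)

lemma newton_invertible: "invertible (PR_jac m P \<alpha> (newton k))"
  using subsolution_newton[of k] by (intro PR_jac_invertible) (auto simp: subsolution_def)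

lemma newton_incseq: "incseq (\<lambda>k. newton k $ i)"
  by (rule incseq_SucI) (simp add: newton_Suc subsolution_le_newton_step subsolution_newton)

lemma newton_le_solution:
  assumes "\<And>i. 0 \<le> y $ i" "y = pr_map y"
  shows "newton k $ i \<le> y $ i"
  using assms
  by (induction k arbitrary: i) (simp_all add: newton_Suc newton_step_le_solution subsolution_newton)

lemma newton_convergent: "\<exists>L. newton \<longlonglongrightarrow> L"
proof -
  have "newton k $ i \<le> 1" for k i
  proof -
    have "newton k $ i \<le> (\<Sum>j\<in>UNIV. newton k $ j)"
      using subsolution_newton[of k] by (intro member_le_sum) (auto simp: subsolution_def)
    also have "\<dots> \<le> 1"
      using subsolution_newton[of k] by (simp add: subsolution_def)
    finally show ?thesis .
  qed
  then have "\<exists>l. (\<lambda>k. newton k $ i) \<longlonglongrightarrow> l" for i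
    using incseq_convergent[OF newton_incseq] by metis
  then obtain L where "(\<lambda>k. newton k $ i) \<longlonglongrightarrow> L i" for i
    by metis
  then have "newton \<longlonglongrightarrow> (\<chi> i. L i)"
    by (intro vec_tendstoI) simp
  then show ?thesis ..
qed

lemma newton_limit_fixpoint:
  assumes L: "newton \<longlonglongrightarrow> L"
  shows "L = pr_map L"
proof -
  have newton_Suc_nth: "newton (Suc k) $ i =
      pr_map (newton k) $ i + \<alpha> * tensor_deriv P (m - 1) (newton k) (newton (Suc k) - newton k) i" for k i
    unfolding newton_Suc by (rule newton_step_nth[OF newton_invertible])
  have "(\<lambda>k. newton (Suc k) - newton k) \<longlonglongrightarrow> 0"
    using tendsto_diff[OF LIMSEQ_Suc[OF L] L] by simp
  then have "(\<lambda>k. tensor_deriv P (m - 1) (newton k) (newton (Suc k) - newton k) i) \<longlonglongrightarrow> 0" for i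
    using tendsto_tensor_deriv[OF L, of _ 0 P "m - 1" i] by (simp add: tensor_deriv_zero)
  moreover have "(\<lambda>k. tensor_apply P (m - 1) (\<lambda>_. newton k) i) \<longlonglongrightarrow> tensor_apply P (m - 1) (\<lambda>_. L) i" for i
    using L by (intro tendsto_tensor_apply)
  ultimately have "(\<lambda>k. newton (Suc k) $ i) \<longlonglongrightarrow> pr_map L $ i + \<alpha> * 0" for i
    unfolding newton_Suc_nth pr_map_nth by (intro tendsto_intros)
  then have "(\<lambda>k. newton (Suc k) $ i) \<longlonglongrightarrow> pr_map L $ i" for i
    by simp
  moreover have "(\<lambda>k. newton (Suc k) $ i) \<longlonglongrightarrow> L $ i" for i
    by (intro LIMSEQ_Suc tendsto_vec_nth L)
  ultimately have "pr_map L $ i = L $ i" for i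
    by (rule LIMSEQ_unique)
  then show ?thesis
    by (simp add: vec_eq_iff)
qed

lemma newton_limit_stochastic:
  assumes L: "newton \<longlonglongrightarrow> L"
  shows "stochastic L"
proof -
  have L_nonneg: "0 \<le> L $ i" for i
    using subsolution_newton by (intro LIMSEQ_le_const[OF tendsto_vec_nth[OF L]]) (auto simp: subsolution_def)
  have "(\<lambda>k. \<Sum>i\<in>UNIV. newton k $ i) \<longlonglongrightarrow> (\<Sum>i\<in>UNIV. L $ i)"
    by (intro tendsto_sum tendsto_vec_nth L)
  then have "(\<Sum>i\<in>UNIV. L $ i) \<le> 1"
    using subsolution_newton by (intro LIMSEQ_le_const2) (auto simp: subsolution_def)
  moreover have "(\<Sum>i\<in>UNIV. L $ i) = \<alpha> * (\<Sum>i\<in>UNIV. L $ i) ^ (m - 1) + (1 - \<alpha>)"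
    using newton_limit_fixpoint[OF L] sum_pr_map[of L] by simp
  ultimately have "(\<Sum>i\<in>UNIV. L $ i) = 1"
    using L_nonneg \<alpha>(1) alpha_mult_less_1 by (intro scalar_fixpoint_eq_one) (auto intro: sum_nonneg)
  with L_nonneg show ?thesis
    by (simp add: stochastic_def)
qed

lemma newton_limit_unique:
  assumes L: "newton \<longlonglongrightarrow> L" and y: "stochastic y" "y = pr_map y"
  shows "y = L"
proof -
  have "L $ i \<le> y $ i" for i
    using y newton_le_solution[of y]
    by (intro LIMSEQ_le_const2[OF tendsto_vec_nth[OF L]]) (auto simp: stochastic_def)
  then show ?thesis
    using stochastic_eq_if_le[OF newton_limit_stochastic[OF L] y(1)] by simp
qed

end

theorem theorem3p2:
  fixes m :: nat and P :: "'n::finite list \<Rightarrow> real" and v :: "real ^ 'n" and \<alpha> :: real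
  assumes "m \<ge> 2"
    and "transition_probability_tensor m P"
    and "stochastic v"
    and "0 \<le> \<alpha>" and "\<alpha> < 1" and "\<alpha> < 1 / (real m - 1)"
  shows "(\<forall>k. invertible (PR_jac m P \<alpha> (newton_seq m P \<alpha> v k))) \<and>
         (\<exists>x. stochastic x \<and> x = \<alpha> *\<^sub>R R_pow m P x + (1 - \<alpha>) *\<^sub>R v \<and>
              (\<forall>y. stochastic y \<and> y = \<alpha> *\<^sub>R R_pow m P y + (1 - \<alpha>) *\<^sub>R v \<longrightarrow> y = x) \<and>
              newton_seq m P \<alpha> v \<longlonglongrightarrow> x)"
proof -
  interpret multilinear_pagerank m P v \<alpha>
    using assms by unfold_locales
  obtain L where L: "newton_seq m P \<alpha> v \<longlonglongrightarrow> L"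
    using newton_convergent by blast
  have "stochastic L \<and> L = pr_map L \<and> (\<forall>y. stochastic y \<and> y = pr_map y \<longrightarrow> y = L)"
    using newton_limit_stochastic[OF L] newton_limit_fixpoint[OF L] newton_limit_unique[OF L] by blast
  with L newton_invertible show ?thesis
    unfolding pr_map_def by blast
qed

end
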